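(* Let $F$ be a uniform set-system. The following are equivalent: (1) $F$ is an HKE set-system; (2) for every two non-empty disjoint subfamilies $\Gamma_1,\Gamma_2\subseteq F$, $$\Big|\bigcap\Gamma_1-\bigcup\Gamma_2\Big|=\Big|\bigcap\Gamma_2-\bigcup\Gamma_1\Big|;$$ (3) the equality in (2) holds for every two non-empty disjoint subfamilies $\Gamma_1,\Gamma_2\subseteq F$ with $\Gamma_1\cup\Gamma_2=F$.
   Context: A set-system is a family of sets; throughout, set-systems are non-empty finite families of finite non-empty sets. A set-system $F$ is uniform if all its members have the same cardinality, denoted $\alpha(F)$. A set-system $F$ is a hereditary König–Egerváry (HKE) set-system if there is a positive integer $\alpha$ such that $|\bigcup\Gamma|+|\bigcap\Gamma|=2\alpha$ for every non-empty subfamily $\Gamma\subseteq F$. Here $X-Y$ denotes set difference. *)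

theory Defs
  imports Main
begin

definition set_system :: "'a set set \<Rightarrow> bool" where
  "set_system F \<longleftrightarrow> F \<noteq> {} \<and> finite F \<and> (\<forall>S\<in>F. finite S \<and> S \<noteq> {})"

definition uniform :: "'a set set \<Rightarrow> bool" where
  "uniform F \<longleftrightarrow> (\<forall>S\<in>F. \<forall>T\<in>F. card S = card T)"

definition HKE :: "'a set set \<Rightarrow> bool" where
  "HKE F \<longleftrightarrow> (\<exists>\<alpha>::nat. \<alpha> > 0 \<and>
     (\<forall>\<Gamma>. \<Gamma> \<subseteq> F \<and> \<Gamma> \<noteq> {} \<longrightarrow> card (\<Union>\<Gamma>) + card (\<Inter>\<Gamma>) = 2 * \<alpha>))"

end

theory Submission
  imports Defs
begin

text \<open>
  Write \<open>N(\<Gamma>\<^sub>1, \<Gamma>\<^sub>2) = |\<Inter>\<Gamma>\<^sub>1 - \<Union>\<Gamma>\<^sub>2|\<close>. Splitting \<open>\<Inter>\<Gamma>\<^sub>1 - \<Union>\<Gamma>\<^sub>2\<close> according to membership in a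
  further set \<open>T\<close> gives \<open>N(\<Gamma>\<^sub>1, \<Gamma>\<^sub>2) = N(\<Gamma>\<^sub>1 \<union> {T}, \<Gamma>\<^sub>2) + N(\<Gamma>\<^sub>1, \<Gamma>\<^sub>2 \<union> {T})\<close>, so balance of
  two of the pairs \<open>(\<Gamma>\<^sub>1 \<union> {T}, \<Gamma>\<^sub>2)\<close>, \<open>(\<Gamma>\<^sub>1, \<Gamma>\<^sub>2)\<close>, \<open>(\<Gamma>\<^sub>1, \<Gamma>\<^sub>2 \<union> {T})\<close> forces balance of the third.
  Adding one set \<open>T\<close> to a family \<open>\<Gamma>\<close> increases \<open>|\<Union>\<Gamma>|\<close> by \<open>N({T}, \<Gamma>)\<close> and decreases
  \<open>|\<Inter>\<Gamma>|\<close> by \<open>N(\<Gamma>, {T})\<close>, so \<open>|\<Union>\<Gamma>| + |\<Inter>\<Gamma>|\<close> is unchanged iff \<open>({T}, \<Gamma>)\<close> is balanced.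
  Induction on families then yields (1) \<open>\<Rightarrow>\<close> (2) \<open>\<Rightarrow>\<close> (1), and (3) \<open>\<Rightarrow>\<close> (2) follows by
  distributing the sets outside \<open>\<Gamma>\<^sub>1 \<union> \<Gamma>\<^sub>2\<close> one at a time.
\<close>

definition balanced :: "'a set set \<Rightarrow> 'a set set \<Rightarrow> bool" where
  "balanced \<Gamma>1 \<Gamma>2 \<longleftrightarrow> card (\<Inter>\<Gamma>1 - \<Union>\<Gamma>2) = card (\<Inter>\<Gamma>2 - \<Union>\<Gamma>1)"

lemma balanced_commute: "balanced \<Gamma>1 \<Gamma>2 \<longleftrightarrow> balanced \<Gamma>2 \<Gamma>1"
  unfolding balanced_def by auto

lemma finite_Inter_of_finite_member: "S \<in> \<Gamma> \<Longrightarrow> finite S \<Longrightarrow> finite (\<Inter>\<Gamma>)"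
  by (meson Inter_lower finite_subset)

lemma card_Inter_Diff_Union_split:
  assumes "S \<in> \<Gamma>1" "finite S"
  shows "card (\<Inter>\<Gamma>1 - \<Union>\<Gamma>2)
       = card (\<Inter>(insert T \<Gamma>1) - \<Union>\<Gamma>2) + card (\<Inter>\<Gamma>1 - \<Union>(insert T \<Gamma>2))"
proof -
  have "finite (\<Inter>\<Gamma>1 - \<Union>\<Gamma>2)"
    using finite_Inter_of_finite_member[OF assms] by simp
  then have "card (\<Inter>\<Gamma>1 - \<Union>\<Gamma>2) = card ((\<Inter>\<Gamma>1 - \<Union>\<Gamma>2) \<inter> T) + card ((\<Inter>\<Gamma>1 - \<Union>\<Gamma>2) - T)"
    by (rule card_Int_Diff)
  moreover have "(\<Inter>\<Gamma>1 - \<Union>\<Gamma>2) \<inter> T = \<Inter>(insert T \<Gamma>1) - \<Union>\<Gamma>2" by blast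
  moreover have "(\<Inter>\<Gamma>1 - \<Union>\<Gamma>2) - T = \<Inter>\<Gamma>1 - \<Union>(insert T \<Gamma>2)" by blast
  ultimately show ?thesis by simp
qed

lemma balanced_insert_iff:
  assumes "S1 \<in> \<Gamma>1" "finite S1" "S2 \<in> \<Gamma>2" "finite S2"
    and "balanced (insert T \<Gamma>1) \<Gamma>2"
  shows "balanced \<Gamma>1 \<Gamma>2 \<longleftrightarrow> balanced \<Gamma>1 (insert T \<Gamma>2)"
  using assms(5) card_Inter_Diff_Union_split[OF assms(1,2), of \<Gamma>2 T]
    card_Inter_Diff_Union_split[OF assms(3,4), of \<Gamma>1 T]
  unfolding balanced_def by linarith

lemma card_Union_insert:
  assumes "finite \<Gamma>" "\<forall>S\<in>\<Gamma>. finite S" "finite T"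
  shows "card (\<Union>(insert T \<Gamma>)) = card (\<Union>\<Gamma>) + card (T - \<Union>\<Gamma>)"
proof -
  have "\<Union>(insert T \<Gamma>) = \<Union>\<Gamma> \<union> (T - \<Union>\<Gamma>)" by blast
  moreover have "card (\<Union>\<Gamma> \<union> (T - \<Union>\<Gamma>)) = card (\<Union>\<Gamma>) + card (T - \<Union>\<Gamma>)"
    using assms by (subst card_Un_disjoint) auto
  ultimately show ?thesis by simp
qed

lemma card_Inter_insert:
  assumes "S \<in> \<Gamma>" "finite S"
  shows "card (\<Inter>\<Gamma>) = card (\<Inter>(insert T \<Gamma>)) + card (\<Inter>\<Gamma> - T)"
  using card_Int_Diff[OF finite_Inter_of_finite_member[OF assms], of T]
  by (simp add: Int_commute)

lemma balanced_singleton_iff: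
  assumes "finite \<Gamma>" "\<Gamma> \<noteq> {}" "\<forall>S\<in>\<Gamma>. finite S" "finite T"
  shows "balanced {T} \<Gamma> \<longleftrightarrow>
    card (\<Union>(insert T \<Gamma>)) + card (\<Inter>(insert T \<Gamma>)) = card (\<Union>\<Gamma>) + card (\<Inter>\<Gamma>)"
proof -
  obtain S where "S \<in> \<Gamma>" using assms(2) by blast
  then show ?thesis
    using card_Union_insert[OF assms(1,3,4)] card_Inter_insert[of S \<Gamma> T] assms(3)
    unfolding balanced_def by auto
qed

lemma balanced_if_Union_Inter_card_const:
  assumes "finite F" "\<forall>S\<in>F. finite S"
    and const: "\<And>\<Gamma>. \<Gamma> \<subseteq> F \<Longrightarrow> \<Gamma> \<noteq> {} \<Longrightarrow> card (\<Union>\<Gamma>) + card (\<Inter>\<Gamma>) = c"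
    and "\<Gamma>1 \<subseteq> F" "\<Gamma>2 \<subseteq> F" "\<Gamma>1 \<noteq> {}" "\<Gamma>2 \<noteq> {}" "\<Gamma>1 \<inter> \<Gamma>2 = {}"
  shows "balanced \<Gamma>1 \<Gamma>2"
proof -
  have "finite \<Gamma>2" using assms(1,5) by (rule finite_subset[rotated])
  from this \<open>\<Gamma>2 \<noteq> {}\<close> \<open>\<Gamma>2 \<subseteq> F\<close> \<open>\<Gamma>1 \<subseteq> F\<close> \<open>\<Gamma>1 \<noteq> {}\<close> \<open>\<Gamma>1 \<inter> \<Gamma>2 = {}\<close>
  show ?thesis
  proof (induction \<Gamma>2 arbitrary: \<Gamma>1 rule: finite_ne_induct)
    case (singleton T)
    have "finite \<Gamma>1" using assms(1) singleton.prems(2) by (rule finite_subset[rotated])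
    with singleton.prems assms(2) show ?case
      using balanced_singleton_iff[of \<Gamma>1 T] const[of \<Gamma>1] const[of "insert T \<Gamma>1"]
      by (auto simp: balanced_commute)
  next
    case (insert T \<Gamma>2)
    have "balanced (insert T \<Gamma>1) \<Gamma>2" "balanced \<Gamma>1 \<Gamma>2"
      using insert by auto
    moreover obtain S1 S2 where "S1 \<in> \<Gamma>1" "S2 \<in> \<Gamma>2"
      using insert.hyps(2) insert.prems(3) by blast
    ultimately show ?case
      using balanced_insert_iff[of S1 \<Gamma>1 S2 \<Gamma>2 T] insert.prems assms(2) by blast
  qed
qed

lemma Union_Inter_card_if_balanced:
  assumes "finite F" "\<forall>S\<in>F. finite S" "uniform F"
    and bal: "\<And>\<Gamma>1 \<Gamma>2. \<Gamma>1 \<subseteq> F \<Longrightarrow> \<Gamma>2 \<subseteq> F \<Longrightarrow> \<Gamma>1 \<noteq> {} \<Longrightarrow> \<Gamma>2 \<noteq> {} \<Longrightarrow> \<Gamma>1 \<inter> \<Gamma>2 = {}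
      \<Longrightarrow> balanced \<Gamma>1 \<Gamma>2"
    and "S \<in> F" "\<Gamma> \<subseteq> F" "\<Gamma> \<noteq> {}"
  shows "card (\<Union>\<Gamma>) + card (\<Inter>\<Gamma>) = 2 * card S"
proof -
  have "finite \<Gamma>" using assms(1,6) by (rule finite_subset[rotated])
  from this \<open>\<Gamma> \<noteq> {}\<close> \<open>\<Gamma> \<subseteq> F\<close> show ?thesis
  proof (induction \<Gamma> rule: finite_ne_induct)
    case (singleton T)
    then have "card T = card S" using \<open>uniform F\<close> \<open>S \<in> F\<close> unfolding uniform_def by blast
    then show ?case by simp
  next
    case (insert T \<Gamma>)
    then have "balanced {T} \<Gamma>" by (intro bal) auto
    moreover have "\<forall>S\<in>\<Gamma>. finite S" "finite T" using insert.prems assms(2) by auto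
    ultimately show ?case
      using balanced_singleton_iff[of \<Gamma> T] insert.hyps(1,2) insert.IH insert.prems by simp
  qed
qed

lemma balanced_if_balanced_partitions:
  assumes "finite F" and fin: "\<forall>S\<in>F. finite S"
    and bal: "\<And>\<Gamma>1 \<Gamma>2. \<Gamma>1 \<subseteq> F \<Longrightarrow> \<Gamma>2 \<subseteq> F \<Longrightarrow> \<Gamma>1 \<noteq> {} \<Longrightarrow> \<Gamma>2 \<noteq> {} \<Longrightarrow> \<Gamma>1 \<inter> \<Gamma>2 = {}
      \<Longrightarrow> \<Gamma>1 \<union> \<Gamma>2 = F \<Longrightarrow> balanced \<Gamma>1 \<Gamma>2"
    and "\<Gamma>1 \<subseteq> F" "\<Gamma>2 \<subseteq> F" "\<Gamma>1 \<noteq> {}" "\<Gamma>2 \<noteq> {}" "\<Gamma>1 \<inter> \<Gamma>2 = {}"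
  shows "balanced \<Gamma>1 \<Gamma>2"
  using assms(4-)
proof (induction "card (F - (\<Gamma>1 \<union> \<Gamma>2))" arbitrary: \<Gamma>1 \<Gamma>2)
  case 0
  then have "\<Gamma>1 \<union> \<Gamma>2 = F" using \<open>finite F\<close> by auto
  with 0 show ?case by (intro bal) auto
next
  case (Suc n)
  then obtain T where T: "T \<in> F" "T \<notin> \<Gamma>1" "T \<notin> \<Gamma>2"
    by (metis Diff_iff UnI1 UnI2 card.empty ex_in_conv nat.distinct(1))
  have "F - (insert T \<Gamma>1 \<union> \<Gamma>2) = F - (\<Gamma>1 \<union> \<Gamma>2) - {T}"
    and "F - (\<Gamma>1 \<union> insert T \<Gamma>2) = F - (\<Gamma>1 \<union> \<Gamma>2) - {T}" by auto
  with Suc.hyps(2) T \<open>finite F\<close>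
  have "card (F - (insert T \<Gamma>1 \<union> \<Gamma>2)) = n" "card (F - (\<Gamma>1 \<union> insert T \<Gamma>2)) = n"
    by auto
  then have "balanced (insert T \<Gamma>1) \<Gamma>2" "balanced \<Gamma>1 (insert T \<Gamma>2)"
    using Suc T by (auto intro!: Suc.hyps(1))
  moreover obtain S1 S2 where "S1 \<in> \<Gamma>1" "S2 \<in> \<Gamma>2" using Suc.prems by blast
  ultimately show ?case
    using balanced_insert_iff[of S1 \<Gamma>1 S2 \<Gamma>2 T] Suc.prems fin by blast
qed

theorem proposition2p2:
  fixes F :: "'a set set"
  assumes "set_system F" and "uniform F"
  shows "(HKE F \<longleftrightarrow>
           (\<forall>\<Gamma>1 \<Gamma>2. \<Gamma>1 \<subseteq> F \<and> \<Gamma>2 \<subseteq> F \<and> \<Gamma>1 \<noteq> {} \<and> \<Gamma>2 \<noteq> {} \<and> \<Gamma>1 \<inter> \<Gamma>2 = {} \<longrightarrow>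
              card (\<Inter>\<Gamma>1 - \<Union>\<Gamma>2) = card (\<Inter>\<Gamma>2 - \<Union>\<Gamma>1)))
       \<and> (HKE F \<longleftrightarrow>
           (\<forall>\<Gamma>1 \<Gamma>2. \<Gamma>1 \<subseteq> F \<and> \<Gamma>2 \<subseteq> F \<and> \<Gamma>1 \<noteq> {} \<and> \<Gamma>2 \<noteq> {} \<and> \<Gamma>1 \<inter> \<Gamma>2 = {}
              \<and> \<Gamma>1 \<union> \<Gamma>2 = F \<longrightarrow>
              card (\<Inter>\<Gamma>1 - \<Union>\<Gamma>2) = card (\<Inter>\<Gamma>2 - \<Union>\<Gamma>1)))"
proof -
  have finF: "finite F" and fin: "\<forall>S\<in>F. finite S"
    using assms(1) unfolding set_system_def by auto
  obtain S where S: "S \<in> F" "card S > 0"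
    using assms(1) unfolding set_system_def by (auto simp: card_gt_0_iff)
  let ?P2 = "\<forall>\<Gamma>1 \<Gamma>2. \<Gamma>1 \<subseteq> F \<and> \<Gamma>2 \<subseteq> F \<and> \<Gamma>1 \<noteq> {} \<and> \<Gamma>2 \<noteq> {} \<and> \<Gamma>1 \<inter> \<Gamma>2 = {}
    \<longrightarrow> balanced \<Gamma>1 \<Gamma>2"
  let ?P3 = "\<forall>\<Gamma>1 \<Gamma>2. \<Gamma>1 \<subseteq> F \<and> \<Gamma>2 \<subseteq> F \<and> \<Gamma>1 \<noteq> {} \<and> \<Gamma>2 \<noteq> {} \<and> \<Gamma>1 \<inter> \<Gamma>2 = {}
    \<and> \<Gamma>1 \<union> \<Gamma>2 = F \<longrightarrow> balanced \<Gamma>1 \<Gamma>2"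
  have HKE_P2: "?P2" if "HKE F"
  proof -
    obtain \<alpha> where \<alpha>: "\<forall>\<Gamma>. \<Gamma> \<subseteq> F \<and> \<Gamma> \<noteq> {} \<longrightarrow> card (\<Union>\<Gamma>) + card (\<Inter>\<Gamma>) = 2 * \<alpha>"
      using \<open>HKE F\<close> unfolding HKE_def by blast
    show ?thesis
      using \<alpha> by (intro allI impI balanced_if_Union_Inter_card_const[OF finF fin, of "2 * \<alpha>"]) auto
  qed
  have P2_HKE: "HKE F" if "?P2"
    unfolding HKE_def
  proof (intro exI[of _ "card S"] conjI allI impI)
    fix \<Gamma> assume "\<Gamma> \<subseteq> F \<and> \<Gamma> \<noteq> {}"
    with that S show "card (\<Union>\<Gamma>) + card (\<Inter>\<Gamma>) = 2 * card S"
      by (intro Union_Inter_card_if_balanced[OF finF fin assms(2)]) auto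
  qed (use S in simp)
  have P3_P2: "?P2" if "?P3"
  proof (intro allI impI)
    fix \<Gamma>1 \<Gamma>2 assume "\<Gamma>1 \<subseteq> F \<and> \<Gamma>2 \<subseteq> F \<and> \<Gamma>1 \<noteq> {} \<and> \<Gamma>2 \<noteq> {} \<and> \<Gamma>1 \<inter> \<Gamma>2 = {}"
    with that show "balanced \<Gamma>1 \<Gamma>2"
      by (intro balanced_if_balanced_partitions[OF finF fin, of \<Gamma>1 \<Gamma>2]) simp_all
  qed
  have P2_P3: "?P3" if "?P2" using that by blast
  have "HKE F \<longleftrightarrow> ?P2" by (rule iffI[OF HKE_P2 P2_HKE])
  moreover have "HKE F \<longleftrightarrow> ?P3" by (rule iffI[OF P2_P3[OF HKE_P2] P2_HKE[OF P3_P2]])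
  ultimately show ?thesis unfolding balanced_def by (rule conjI)
qed

end
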